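(* Let $0\le r\le n$, let $A\in\mathcal{A}_{n+1,r+1}$ with $|\mathrm{lrs}(A)|=i$ and $|\mathrm{rls}(A)|=j$, fix any tiling of the rhombic diagram $\Gamma(X(A))$, and let $T(A)$ be the filling obtained by applying the fusion-exchange algorithm to $A$. Then $\mathrm{wt}(T(A))=\alpha^{n-r-i}\beta^{n-r-j}$ at $q=1$.
   Context: Words and diagrams. For $0\le r\le n$ let $B_n^r$ be the set of words $X\in\{H,L,0\}^n$ with exactly $r$ letters $L$. If $X$ has $k$ letters $H$, $r$ letters $L$ and $\ell$ letters $0$, its rhombic diagram $\Gamma(X)$ is the closed region bounded by two paths of unit steps, using the directions west (horizontal), south (vertical) and southwest (diagonal: a fixed unit vector strictly between west and south), both going from a point $P$ to a point $Q$: the northwest boundary consists of $\ell$ west steps, then $r$ southwest steps, then $k$ south steps; the southeast boundary is obtained by reading $X$ left to right and taking a west step for each $0$, a southwest step for each $L$, a south step for each $H$. A tiling of $\Gamma(X)$ is a tiling by unit rhombi of three kinds: squares (horizontal and vertical edges), tall rhombi (vertical and diagonal edges), short rhombi (horizontal and diagonal edges). A west-strip (resp. north-strip, northwest-strip) is a maximal set of tiles connected through shared vertical (resp. horizontal, diagonal) edges; each runs from an edge of the southeast boundary to an edge of the northwest boundary, and each edge of the tiling lies in exactly one strip, of the type of its direction. Each tile has two edges on its lower-right side: its east edge (vertical for squares and tall rhombi, diagonal for short rhombi) and its south edge (horizontal for squares and short rhombi, diagonal for tall rhombi); the parallel edges on its upper-left side are its west and north edges. Weight. For a filling $T$ of the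 tiles of a tiling of $\Gamma(X)$ by symbols $\alpha,\beta,q$ (tiles may be empty), $\mathrm{wt}(T)=\alpha^k\beta^\ell\cdot(\text{product of all symbols in }T)$, with $k,\ell$ the numbers of $H$'s and $0$'s in $X$. Assemblées. An assemblée of size $(m,s)$ is a collection of $s$ nonempty, pairwise disjoint, linearly ordered sets (blocks) with union $\{1,\dots,m\}$; the last element of a block is its block-end. Blocks are listed in the canonical order with decreasing block-ends, and the assemblée is identified with the concatenated word. $\mathcal{A}_{m,s}$ is the set of these. For $A\in\mathcal{A}_{n+1,r+1}$ with block-ends $b_1>\dots>b_{r+1}$: $\mathrm{lrs}(A)$ is the set of $x>b_1$ larger than every element $y>b_1$ to the right of $x$ in $A$; $\mathrm{rls}(A)$ is the set of $x<b_{r+1}$ larger than every $y<b_{r+1}$ to the left of $x$ in $A$. A non-block-end element $x$ is an increase if $x+1$ appears to the right of $x$ in $A$, and a decrease otherwise (so $n+1$, if not a block-end, is a decrease). $X(A)\in B_n^r$ is obtained from $A$ by deleting its last letter $b_{r+1}$ and replacing each increase by $H$, each decrease by $0$ and each remaining block-end by $L$. Fusion-exchange algorithm. A label is a finite, possibly empty, set of consecutive integers; for labels $E,S$ write $E\succ S$ if both are nonempty and $\min E=\max S+1$. Given $A\in\mathcal{A}_{n+1,r+1}$ and a tiling of $\Gamma(X(A))$: initially the southeast boundary edges, in order from $P$ to $Q$, receive the singleton labels of the letters of $A$ from left to right, $b_{r+1}$ omitted. Step: choose a tile whose east and south edges are labeled, say by $E$ and $S$, and whose west and north edges are not. (R I)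 If $E\succ S$ and the south edge is horizontal: west edge gets $E\cup S$, north edge gets $\emptyset$, place $\alpha$ in the tile. (R II) If $S\succ E$ and the east edge is vertical: north edge gets $E\cup S$, west edge gets $\emptyset$, place $\beta$. (R III) Otherwise: west edge gets $E$, north edge gets $S$, and place $q$ if $E\ne\emptyset$ and $S\ne\emptyset$ (else leave the tile empty). Repeat until every edge is labeled; $T(A)$ is the resulting filling. *)

theory Defs
  imports Main
begin

text \<open>Letters H, L, 0. A step of a boundary path: LZ (letter 0) = west,
  LL = southwest, LH = south.\<close>
datatype letter = LH | LL | LZ

definition nletters :: "letter \<Rightarrow> letter list \<Rightarrow> nat" where
  "nletters c X = length (filter (\<lambda>d. d = c) X)"

definition nw_word :: "letter list \<Rightarrow> letter list" where
  "nw_word X = filter (\<lambda>d. d = LZ) X @ filter (\<lambda>d. d = LL) X @ filter (\<lambda>d. d = LH) X"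

text \<open>A tile whose east and south edges are consecutive steps (east edge first, then
  south edge, reading the boundary path from P to Q) of letters a, b.
  Squares: (H,0); tall rhombi: (H,L); short rhombi: (L,0).\<close>
definition tile_ok :: "letter \<Rightarrow> letter \<Rightarrow> bool" where
  "tile_ok a b \<longleftrightarrow> (a, b) \<in> {(LH, LZ), (LH, LL), (LL, LZ)}"

definition swap_at :: "'a list \<Rightarrow> nat \<Rightarrow> 'a list" where
  "swap_at w p = w[p := w ! Suc p, Suc p := w ! p]"

text \<open>A tiling of Gamma(X), encoded as a sequence of tile placements: starting from the
  southeast boundary path, each entry p places a tile whose east and south edges are the
  p-th and (p+1)-th steps of the current path, replacing them by the tile's north and west
  edges; at the end the path must be the northwest boundary.\<close>
fun tiling_seq :: "letter list \<Rightarrow> nat list \<Rightarrow> bool" where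
  "tiling_seq w [] \<longleftrightarrow> w = nw_word w"
| "tiling_seq w (p # ps) \<longleftrightarrow>
     Suc p < length w \<and> tile_ok (w ! p) (w ! Suc p) \<and> tiling_seq (swap_at w p) ps"

text \<open>An assemblee of size (m,s), as the list of its blocks in canonical order
  (decreasing block-ends).\<close>
definition assemblees :: "nat \<Rightarrow> nat \<Rightarrow> nat list list set" where
  "assemblees m s = {bs. length bs = s \<and> (\<forall>b\<in>set bs. b \<noteq> []) \<and>
      distinct (concat bs) \<and> set (concat bs) = {1..m} \<and>
      sorted_wrt (>) (map last bs)}"

definition block_ends :: "nat list list \<Rightarrow> nat set" where
  "block_ends bs = set (map last bs)"

definition bmax :: "nat list list \<Rightarrow> nat" where
  "bmax bs = last (hd bs)"

definition bmin :: "nat list list \<Rightarrow> nat" where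
  "bmin bs = last (last bs)"

definition lrs :: "nat list list \<Rightarrow> nat set" where
  "lrs bs = (let w = concat bs in
     {x. \<exists>p < length w. w ! p = x \<and> x > bmax bs \<and>
         (\<forall>q. p < q \<and> q < length w \<and> w ! q > bmax bs \<longrightarrow> w ! q < x)})"

definition rls :: "nat list list \<Rightarrow> nat set" where
  "rls bs = (let w = concat bs in
     {x. \<exists>p < length w. w ! p = x \<and> x < bmin bs \<and>
         (\<forall>q < p. w ! q < bmin bs \<longrightarrow> w ! q < x)})"

definition is_increase :: "nat list list \<Rightarrow> nat \<Rightarrow> bool" where
  "is_increase bs x \<longleftrightarrow> x \<notin> block_ends bs \<and>
     (let w = concat bs in \<exists>p q. p < q \<and> q < length w \<and> w ! p = x \<and> w ! q = Suc x)"

definition letter_of :: "nat list list \<Rightarrow> nat \<Rightarrow> letter" where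
  "letter_of bs x = (if x \<in> block_ends bs then LL else if is_increase bs x then LH else LZ)"

definition Xword :: "nat list list \<Rightarrow> letter list" where
  "Xword bs = map (letter_of bs) (butlast (concat bs))"

datatype tsym = SAlpha | SBeta | SQ | SEmpty

definition succ_lab :: "nat set \<Rightarrow> nat set \<Rightarrow> bool" where
  "succ_lab E S \<longleftrightarrow> E \<noteq> {} \<and> S \<noteq> {} \<and> Min E = Max S + 1"

text \<open>Given east edge (letter a, label E) and south edge (letter b, label S), return
  (label of north edge, label of west edge, symbol placed in the tile).
  The south edge is horizontal iff b = 0; the east edge is vertical iff a = H.\<close>
definition fe_tile :: "letter \<Rightarrow> nat set \<Rightarrow> letter \<Rightarrow> nat set \<Rightarrow> nat set \<times> nat set \<times> tsym" where
  "fe_tile a E b S =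
     (if succ_lab E S \<and> b = LZ then ({}, E \<union> S, SAlpha)
      else if succ_lab S E \<and> a = LH then (E \<union> S, {}, SBeta)
      else (S, E, if E \<noteq> {} \<and> S \<noteq> {} then SQ else SEmpty))"

fun fe_fill :: "(letter \<times> nat set) list \<Rightarrow> nat list \<Rightarrow> tsym list" where
  "fe_fill st [] = []"
| "fe_fill st (p # ps) =
     (let (a, E) = st ! p; (b, S) = st ! Suc p; (N, W, t) = fe_tile a E b S
      in t # fe_fill (st[p := (b, N), Suc p := (a, W)]) ps)"

definition init_labels :: "nat list list \<Rightarrow> (letter \<times> nat set) list" where
  "init_labels bs = zip (Xword bs) (map (\<lambda>x. {x}) (butlast (concat bs)))"

definition sym_val :: "'a::comm_semiring_1 \<Rightarrow> 'a \<Rightarrow> 'a \<Rightarrow> tsym \<Rightarrow> 'a" where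
  "sym_val \<alpha> \<beta> q t = (case t of SAlpha \<Rightarrow> \<alpha> | SBeta \<Rightarrow> \<beta> | SQ \<Rightarrow> q | SEmpty \<Rightarrow> 1)"

definition wt :: "'a::comm_semiring_1 \<Rightarrow> 'a \<Rightarrow> 'a \<Rightarrow> letter list \<Rightarrow> tsym list \<Rightarrow> 'a" where
  "wt \<alpha> \<beta> q X T = \<alpha> ^ nletters LH X * \<beta> ^ nletters LZ X * prod_list (map (sym_val \<alpha> \<beta> q) T)"

end

(*
  The run of the fusion-exchange algorithm is followed edge by edge along the current
  path from P to Q. Every edge carries a letter and a label; the labels are intervals
  that partition {1..n+1} minus the smallest block-end bmin, and an H- or 0-edge with
  nonempty label is an H-edge exactly when the successor of its maximum lies in a
  label further right (or is bmin), which is how X(A) is read off A. This rule, together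
  with the bounds bmin < max <= bmax on L-labels, survives every tile. Moreover the sets
  lrs and rls, computed from the sequence of label maxima, never change, while each
  alpha removes one nonempty 0-label and each beta one nonempty H-label.

  On the final path 0^l L^r H^k the successor rule forces every value above the maximum
  of a 0-label to lie further left and every value between the maximum of an H-label
  and bmin to lie further right. So the maxima of the nonempty 0-labels (H-labels) are
  exactly the elements of lrs (rls): #alpha = l - i and #beta = k - j. With k + l = n - r
  the weight alpha^k beta^l alpha^#alpha beta^#beta is alpha^(n-r-i) beta^(n-r-j).
*)
theory Submission
  imports Defs
begin

section \<open>Left-to-right and right-to-left maxima\<close>

(* lrs and rls of the paper, for the threshold b = bmax resp. b = bmin. *)
fun rl_maxima_above :: "nat \<Rightarrow> nat list \<Rightarrow> nat set" where
  "rl_maxima_above b [] = {}"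
| "rl_maxima_above b (x # xs) =
     (if b < x \<and> (\<forall>y\<in>set xs. b < y \<longrightarrow> y < x) then insert x (rl_maxima_above b xs)
      else rl_maxima_above b xs)"

fun lr_maxima_below :: "nat \<Rightarrow> nat list \<Rightarrow> nat set" where
  "lr_maxima_below b [] = {}"
| "lr_maxima_below b (x # xs) =
     (if x < b then insert x {y \<in> lr_maxima_below b xs. x < y} else lr_maxima_below b xs)"

lemma rl_maxima_above_conv_nth:
  "rl_maxima_above b xs = {x. \<exists>p<length xs. xs ! p = x \<and> b < x \<and>
     (\<forall>q<length xs. p < q \<and> b < xs ! q \<longrightarrow> xs ! q < x)}"
proof (induction xs)
  case (Cons a xs)
  have "(\<forall>y\<in>set xs. b < y \<longrightarrow> y < a) \<longleftrightarrow> (\<forall>q<length xs. b < xs ! q \<longrightarrow> xs ! q < a)"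
    by (simp add: all_set_conv_all_nth)
  then show ?case
    unfolding rl_maxima_above.simps Cons.IH
    by (simp add: Ex_less_Suc2 All_less_Suc2) blast
qed simp

lemma lr_maxima_below_conv_nth:
  "lr_maxima_below b xs = {x. \<exists>p<length xs. xs ! p = x \<and> x < b \<and>
     (\<forall>q<p. xs ! q < b \<longrightarrow> xs ! q < x)}"
proof (induction xs)
  case (Cons a xs)
  show ?case
    unfolding lr_maxima_below.simps Cons.IH
    by (simp add: Ex_less_Suc2 All_less_Suc2) blast
qed simp

lemma rl_maxima_above_append:
  "rl_maxima_above b (xs @ ys) =
     {x \<in> rl_maxima_above b xs. \<forall>y\<in>set ys. b < y \<longrightarrow> y < x} \<union> rl_maxima_above b ys"
  by (induction xs) auto

lemma lr_maxima_below_append: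
  "lr_maxima_below b (xs @ ys) =
     lr_maxima_below b xs \<union> {y \<in> lr_maxima_below b ys. \<forall>x\<in>set xs. x < b \<longrightarrow> x < y}"
  by (induction xs) auto

lemma rl_maxima_above_snoc_le:
  "y \<le> b \<Longrightarrow> rl_maxima_above b (xs @ [y]) = rl_maxima_above b xs"
  by (simp add: rl_maxima_above_append)

lemma lr_maxima_below_snoc_ge:
  "b \<le> y \<Longrightarrow> lr_maxima_below b (xs @ [y]) = lr_maxima_below b xs"
  by (simp add: lr_maxima_below_append)

lemma rl_maxima_above_drop_smaller:
  assumes "y < x" and "b < y \<longrightarrow> (\<exists>t\<in>set ys. b < t \<and> y < t)"
  shows "rl_maxima_above b (xs @ x # y # ys) = rl_maxima_above b (xs @ x # ys)"
  using assms unfolding rl_maxima_above_append by auto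

lemma rl_maxima_above_drop_before_larger:
  "x < y \<Longrightarrow> rl_maxima_above b (xs @ x # y # ys) = rl_maxima_above b (xs @ y # ys)"
  unfolding rl_maxima_above_append by auto

lemma rl_maxima_above_swap:
  assumes "b < x \<and> b < y \<longrightarrow> (\<exists>t\<in>set ys. b < t \<and> x < t)"
  shows "rl_maxima_above b (xs @ x # y # ys) = rl_maxima_above b (xs @ y # x # ys)"
proof -
  have "rl_maxima_above b (x # y # ys) = rl_maxima_above b (y # x # ys)"
    using assms by auto
  then show ?thesis
    by (simp add: rl_maxima_above_append insert_commute)
qed

lemma lr_maxima_below_drop_smaller:
  assumes "y < x" and "y < b \<longrightarrow> x < b"
  shows "lr_maxima_below b (xs @ x # y # ys) = lr_maxima_below b (xs @ x # ys)"
  using assms unfolding lr_maxima_below_append by auto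

lemma lr_maxima_below_drop_before_larger:
  assumes "x < y" and "x < b \<longrightarrow> (\<exists>s\<in>set xs. s < b \<and> x < s)"
  shows "lr_maxima_below b (xs @ x # y # ys) = lr_maxima_below b (xs @ y # ys)"
  using assms unfolding lr_maxima_below_append by auto

lemma lr_maxima_below_swap:
  assumes "x < b \<and> y < b \<longrightarrow> (\<exists>s\<in>set xs. s < b \<and> y < s)"
  shows "lr_maxima_below b (xs @ x # y # ys) = lr_maxima_below b (xs @ y # x # ys)"
  using assms unfolding lr_maxima_below_append by (auto; force)

lemma rl_maxima_above_sorted:
  "sorted_wrt (>) (filter ((<) b) xs) \<Longrightarrow> rl_maxima_above b xs = set (filter ((<) b) xs)"
proof (induction xs)
  case (Cons x xs)
  then show ?case by (cases "b < x") auto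
qed simp

lemma lr_maxima_below_sorted:
  "sorted_wrt (<) (filter (\<lambda>x. x < b) xs) \<Longrightarrow> lr_maxima_below b xs = set (filter (\<lambda>x. x < b) xs)"
proof (induction xs)
  case (Cons x xs)
  then show ?case by (cases "x < b") auto
qed simp

lemma sorted_wrt_greater_distinct: "sorted_wrt (>) xs \<Longrightarrow> distinct (xs :: 'a::linorder list)"
  by (induction xs) auto

lemma sorted_wrt_greater_bounds:
  "sorted_wrt (>) xs \<Longrightarrow> x \<in> set xs \<Longrightarrow> last xs \<le> x \<and> x \<le> hd (xs :: 'a::linorder list)"
proof (induction xs)
  case (Cons a xs)
  then show ?case
    using last_in_set[of xs] by (cases "xs = []") (auto simp: less_imp_le)
qed simp

section \<open>Interval labels and labelled paths\<close>

definition nat_interval :: "nat set \<Rightarrow> bool" where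
  "nat_interval I \<longleftrightarrow> (\<exists>x y. I = {x..y})"

lemma Max_atLeastAtMost_nat: "x \<le> y \<Longrightarrow> Max {x..y::nat} = y"
  and Min_atLeastAtMost_nat: "x \<le> y \<Longrightarrow> Min {x..y::nat} = x"
  by (auto intro: Max_eqI Min_eqI)

lemma nat_intervalE:
  assumes "nat_interval I" "I \<noteq> {}"
  obtains x y where "I = {x..y}" "x \<le> y" "Min I = x" "Max I = y"
  using assms Max_atLeastAtMost_nat Min_atLeastAtMost_nat unfolding nat_interval_def by force

lemma nat_interval_empty [simp]: "nat_interval {}"
  unfolding nat_interval_def by (intro exI[of _ 1] exI[of _ 0]) simp

lemma nat_interval_singleton [simp]: "nat_interval {x}"
  unfolding nat_interval_def by (intro exI[of _ x]) simp

lemma nat_interval_finite: "nat_interval I \<Longrightarrow> finite I"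
  by (auto simp: nat_interval_def)

lemma nat_interval_between:
  assumes "nat_interval I" "u \<in> I" "u \<le> v" "v \<le> Max I"
  shows "v \<in> I"
proof -
  obtain x y where "I = {x..y}" "Max I = y"
    using assms(1,2) by (metis empty_iff nat_intervalE)
  with assms(2-4) show ?thesis by simp
qed

lemma nat_interval_Max_less:
  assumes "nat_interval I" "v \<in> I" "c \<notin> I" "v < c"
  shows "Max I < c"
  using nat_interval_between[OF assms(1,2)] assms(3,4) by (meson not_le less_imp_le)

lemma nat_interval_succ_lab_union:
  assumes "nat_interval E" "nat_interval S" "succ_lab E S"
  shows "nat_interval (E \<union> S)" and "Max (E \<union> S) = Max E" and "Max S < Max E"
proof -
  have "E \<noteq> {}" "S \<noteq> {}" "Min E = Max S + 1"
    using assms(3) unfolding succ_lab_def by auto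
  then obtain e0 e1 s0 s1 where E: "E = {e0..e1}" "e0 \<le> e1" "Min E = e0" "Max E = e1"
    and S: "S = {s0..s1}" "s0 \<le> s1" "Max S = s1" and "e0 = s1 + 1"
    using assms(1,2) by (metis nat_intervalE)
  then have "E \<union> S = {s0..e1}" by auto
  then show "nat_interval (E \<union> S)" "Max (E \<union> S) = Max E" "Max S < Max E"
    using E S \<open>e0 = s1 + 1\<close> by (auto simp: nat_interval_def Max_atLeastAtMost_nat)
qed

lemma nat_interval_adjacent:
  assumes "nat_interval E" "nat_interval S" "E \<inter> S = {}" "S \<noteq> {}" "Max S + 1 \<in> E"
  shows "succ_lab E S"
proof -
  obtain e0 e1 where E: "E = {e0..e1}" "Min E = e0"
    using assms(1,5) by (metis empty_iff nat_intervalE)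
  obtain s0 s1 where S: "S = {s0..s1}" "s0 \<le> s1" "Max S = s1"
    using assms(2,4) by (metis nat_intervalE)
  have "\<not> e0 \<le> s1"
    using assms(3,5) E S by auto
  then show ?thesis
    using assms(4,5) E S unfolding succ_lab_def by auto
qed

(* A state of the algorithm is the current path from P to Q, as the list of its edges
   with their letters and labels. *)
definition labels :: "(letter \<times> nat set) list \<Rightarrow> nat set" where
  "labels st = (\<Union>e\<in>set st. snd e)"

lemma labels_Nil [simp]: "labels [] = {}"
  and labels_Cons [simp]: "labels (e # st) = snd e \<union> labels st"
  and labels_append [simp]: "labels (xs @ ys) = labels xs \<union> labels ys"
  by (simp_all add: labels_def)

lemma in_labelsE:
  assumes "v \<in> labels st"
  obtains xs d ys where "st = xs @ d # ys" and "v \<in> snd d"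
  using assms split_list unfolding labels_def by fast

fun disjoint_labels :: "(letter \<times> nat set) list \<Rightarrow> bool" where
  "disjoint_labels [] = True"
| "disjoint_labels (e # st) \<longleftrightarrow> snd e \<inter> labels st = {} \<and> disjoint_labels st"

lemma disjoint_labels_append [simp]:
  "disjoint_labels (xs @ ys) \<longleftrightarrow>
     disjoint_labels xs \<and> disjoint_labels ys \<and> labels xs \<inter> labels ys = {}"
  by (induction xs) auto

lemma disjoint_labels_unique:
  "disjoint_labels st \<Longrightarrow> d \<in> set st \<Longrightarrow> d' \<in> set st \<Longrightarrow> v \<in> snd d \<Longrightarrow> v \<in> snd d' \<Longrightarrow> d = d'"
  by (induction st) (auto simp: labels_def)

definition label_maxima :: "(letter \<times> nat set) list \<Rightarrow> nat list" where
  "label_maxima st = map (\<lambda>e. Max (snd e)) (filter (\<lambda>e. snd e \<noteq> {}) st)"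

lemma label_maxima_Nil [simp]: "label_maxima [] = []"
  and label_maxima_Cons:
    "label_maxima (e # st) = (if snd e = {} then label_maxima st else Max (snd e) # label_maxima st)"
  and label_maxima_append [simp]: "label_maxima (xs @ ys) = label_maxima xs @ label_maxima ys"
  by (simp_all add: label_maxima_def)

lemma Max_in_label_maxima:
  "d \<in> set st \<Longrightarrow> snd d \<noteq> {} \<Longrightarrow> Max (snd d) \<in> set (label_maxima st)"
  by (auto simp: label_maxima_def)

lemma filter_label_maxima:
  assumes "\<And>e. e \<in> set st \<Longrightarrow> snd e \<noteq> {} \<Longrightarrow> P (Max (snd e)) \<longleftrightarrow> Q e"
  shows "filter P (label_maxima st) = label_maxima (filter Q st)"
  using assms by (induction st) (auto simp: label_maxima_Cons)

lemma sorted_wrt_label_maxima: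
  assumes "\<And>xs d ys e zs. st = xs @ d # ys @ e # zs \<Longrightarrow> Q d \<Longrightarrow> Q e \<Longrightarrow>
             snd d \<noteq> {} \<Longrightarrow> snd e \<noteq> {} \<Longrightarrow> P (Max (snd d)) (Max (snd e))"
  shows "sorted_wrt P (label_maxima (filter Q st))"
  using assms
proof (induction st)
  case (Cons d st)
  have "P (Max (snd d)) (Max (snd e))" if "e \<in> set st" "Q d" "Q e" "snd d \<noteq> {}" "snd e \<noteq> {}" for e
    using that Cons.prems[of "[]" d _ e] split_list[OF that(1)] by fastforce
  moreover have "sorted_wrt P (label_maxima (filter Q st))"
    using Cons.prems[of "d # _"] by (intro Cons.IH) auto
  ultimately show ?case
    by (auto simp: label_maxima_Cons label_maxima_def)
qed simp

definition count_labelled :: "letter \<Rightarrow> (letter \<times> nat set) list \<Rightarrow> nat" where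
  "count_labelled c st = length (filter (\<lambda>e. fst e = c \<and> snd e \<noteq> {}) st)"

lemma count_labelled_append [simp]:
  "count_labelled c (xs @ ys) = count_labelled c xs + count_labelled c ys"
  by (simp add: count_labelled_def)

lemma count_labelled_conv_label_maxima:
  "count_labelled c st = length (label_maxima (filter (\<lambda>e. fst e = c) st))"
  by (simp add: count_labelled_def label_maxima_def conj_commute)

(* The rule defining X(A), lifted to labels: an edge that is not an L-edge is an H-edge
   iff the successor of the maximum of its label lies in R. Along a path, R consists of
   the labels further right and the omitted last letter bmin. *)
definition increase_ok :: "nat set \<Rightarrow> letter \<times> nat set \<Rightarrow> bool" where
  "increase_ok R e \<longleftrightarrow> (fst e \<noteq> LL \<and> snd e \<noteq> {} \<longrightarrow> (fst e = LH \<longleftrightarrow> Max (snd e) + 1 \<in> R))"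

fun increases_ok :: "nat set \<Rightarrow> (letter \<times> nat set) list \<Rightarrow> bool" where
  "increases_ok R [] = True"
| "increases_ok R (e # st) \<longleftrightarrow> increase_ok (R \<union> labels st) e \<and> increases_ok R st"

lemma increases_ok_append:
  "increases_ok R (xs @ ys) \<longleftrightarrow> increases_ok (R \<union> labels ys) xs \<and> increases_ok R ys"
  by (induction xs) (auto simp: Un_ac)

lemma increases_ok_at:
  "increases_ok R (xs @ e # ys) \<Longrightarrow> increase_ok (R \<union> labels ys) e"
  by (simp add: increases_ok_append)

section \<open>A single tile\<close>

lemma fe_tile_cases:
  assumes "fe_tile a E b S = (N, W, t)"
  obtains (fusion_alpha) "succ_lab E S" "b = LZ" "N = {}" "W = E \<union> S" "t = SAlpha"
  | (fusion_beta) "succ_lab S E" "a = LH" "\<not> (succ_lab E S \<and> b = LZ)"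
      "N = E \<union> S" "W = {}" "t = SBeta"
  | (exchange) "\<not> (succ_lab E S \<and> b = LZ)" "\<not> (succ_lab S E \<and> a = LH)" "N = S" "W = E"
      "t = (if E \<noteq> {} \<and> S \<noteq> {} then SQ else SEmpty)"
proof (cases "succ_lab E S \<and> b = LZ")
  case True
  then have "(N, W, t) = ({}, E \<union> S, SAlpha)"
    using assms by (simp add: fe_tile_def)
  with True show thesis by (intro fusion_alpha) auto
next
  case not_alpha: False
  show thesis
  proof (cases "succ_lab S E \<and> a = LH")
    case True
    then have "(N, W, t) = (E \<union> S, {}, SBeta)"
      using assms not_alpha by (simp add: fe_tile_def)
    with True not_alpha show thesis by (intro fusion_beta) auto
  next
    case False
    have "(N, W, t) = (S, E, if E \<noteq> {} \<and> S \<noteq> {} then SQ else SEmpty)"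
      using assms unfolding fe_tile_def if_not_P[OF not_alpha] if_not_P[OF False] by (rule sym)
    with False not_alpha show thesis by (intro exchange) auto
  qed
qed

lemma fe_tile_union:
  assumes "fe_tile a E b S = (N, W, t)"
  shows "N \<union> W = E \<union> S"
  using assms by (cases rule: fe_tile_cases) auto

lemma fe_tile_disjoint:
  assumes "fe_tile a E b S = (N, W, t)" "E \<inter> S = {}"
  shows "N \<inter> W = {}"
  using assms by (cases rule: fe_tile_cases) auto

lemma fe_tile_nat_interval:
  assumes "fe_tile a E b S = (N, W, t)" "nat_interval E" "nat_interval S"
  shows "nat_interval N \<and> nat_interval W"
  using assms(1)
proof (cases rule: fe_tile_cases)
  case fusion_alpha
  then show ?thesis using nat_interval_succ_lab_union[OF assms(2,3)] by simp
next
  case fusion_beta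
  then show ?thesis using nat_interval_succ_lab_union[OF assms(3,2)] by (simp add: Un_commute)
qed (use assms in simp)

lemma fe_tile_keeps_LL:
  assumes "fe_tile a E b S = (N, W, t)" "nat_interval E" "nat_interval S"
  shows "a = LL \<Longrightarrow> E \<subseteq> W \<and> Max W = Max E" and "b = LL \<Longrightarrow> S \<subseteq> N \<and> Max N = Max S"
proof -
  show "E \<subseteq> W \<and> Max W = Max E" if "a = LL"
    using assms(1) that
    by (cases rule: fe_tile_cases) (auto simp: nat_interval_succ_lab_union(2)[OF assms(2,3)])
  have Max_union: "Max (E \<union> S) = Max S" if "succ_lab S E"
    using nat_interval_succ_lab_union(2)[OF assms(3,2) that] by (simp only: Un_commute)
  show "S \<subseteq> N \<and> Max N = Max S" if "b = LL"
    using assms(1) that by (cases rule: fe_tile_cases) (auto simp: Max_union)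
qed

lemma fe_tile_increase_ok:
  assumes tile: "fe_tile a E b S = (N, W, t)" and "tile_ok a b"
    and E: "nat_interval E" and S: "nat_interval S" and "E \<inter> S = {}"
    and ok_E: "increase_ok (R \<union> S) (a, E)" and ok_S: "increase_ok R (b, S)"
  shows "increase_ok (R \<union> W) (b, N) \<and> increase_ok R (a, W)"
proof -
  have a: "a = LH \<or> a = LL" and b: "b = LZ \<or> b = LL"
    using \<open>tile_ok a b\<close> unfolding tile_ok_def by auto
  from tile show ?thesis
  proof (cases rule: fe_tile_cases)
    case fusion_alpha
    have "E \<noteq> {}" "Max S < Max E"
      using fusion_alpha(1) nat_interval_succ_lab_union(3)[OF E S] by (simp_all add: succ_lab_def)
    then have "Max E + 1 \<notin> S"
      using Max_ge[OF nat_interval_finite[OF S]] by (meson add_le_same_cancel1 le_trans not_one_le_zero less_imp_le)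
    moreover have "Max W = Max E"
      using fusion_alpha(1,4) nat_interval_succ_lab_union(2)[OF E S] by simp
    ultimately show ?thesis
      using fusion_alpha(3,4) ok_E a \<open>E \<noteq> {}\<close> unfolding increase_ok_def by auto
  next
    case fusion_beta
    then have "S \<noteq> {}" "Max N = Max S"
      using nat_interval_succ_lab_union(2)[OF S E] by (simp_all add: succ_lab_def Un_commute)
    then show ?thesis
      using fusion_beta(4,5) ok_S b unfolding increase_ok_def by auto
  next
    case exchange
    (* Max S + 1 \<in> E (or Max E + 1 \<in> S) would have made the labels fuse. *)
    have "increase_ok (R \<union> E) (b, S)"
    proof (cases "b = LZ \<and> S \<noteq> {}")
      case True
      then have "Max S + 1 \<notin> E"
        using nat_interval_adjacent[OF E S \<open>E \<inter> S = {}\<close>] exchange(1) by blast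
      with True ok_S show ?thesis by (simp add: increase_ok_def)
    qed (use b in \<open>auto simp: increase_ok_def\<close>)
    moreover have "increase_ok R (a, E)"
    proof (cases "a = LH \<and> E \<noteq> {}")
      case True
      then have "Max E + 1 \<notin> S"
        using nat_interval_adjacent[OF S E] \<open>E \<inter> S = {}\<close> exchange(2) by blast
      with True ok_E show ?thesis by (simp add: increase_ok_def)
    qed (use a in \<open>auto simp: increase_ok_def\<close>)
    ultimately show ?thesis
      using exchange(3,4) by simp
  qed
qed

lemma fe_step_LL_edges:
  assumes tile: "fe_tile a E b S = (N, W, t)" and E: "nat_interval E" and S: "nat_interval S"
  shows "e \<in> set (xs @ (b, N) # (a, W) # ys) \<Longrightarrow> fst e = LL \<Longrightarrow>
           \<exists>e0\<in>set (xs @ (a, E) # (b, S) # ys). fst e0 = LL \<and> snd e0 \<subseteq> snd e \<and> Max (snd e) = Max (snd e0)"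
    and "e0 \<in> set (xs @ (a, E) # (b, S) # ys) \<Longrightarrow> fst e0 = LL \<Longrightarrow>
           \<exists>e\<in>set (xs @ (b, N) # (a, W) # ys). fst e = LL \<and> snd e0 \<subseteq> snd e"
  using fe_tile_keeps_LL[OF tile E S] by auto

lemma fe_step_increases_ok:
  assumes ok: "increases_ok R (xs @ (a, E) # (b, S) # ys)"
    and tile: "fe_tile a E b S = (N, W, t)" and "tile_ok a b"
    and E: "nat_interval E" and S: "nat_interval S" and "E \<inter> S = {}"
  shows "increases_ok R (xs @ (b, N) # (a, W) # ys)"
proof -
  let ?R = "R \<union> labels ys"
  have same_labels: "labels ((b, N) # (a, W) # ys) = labels ((a, E) # (b, S) # ys)"
    using fe_tile_union[OF tile] by auto
  have old: "increases_ok (R \<union> labels ((a, E) # (b, S) # ys)) xs"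
    "increase_ok (?R \<union> S) (a, E)" "increase_ok ?R (b, S)" "increases_ok R ys"
    using ok unfolding increases_ok_append by (simp_all add: Un_ac)
  have "increase_ok (?R \<union> W) (b, N) \<and> increase_ok ?R (a, W)"
    using fe_tile_increase_ok[OF tile \<open>tile_ok a b\<close> E S \<open>E \<inter> S = {}\<close> old(2,3)] .
  with old(1,4) show ?thesis
    unfolding increases_ok_append same_labels by (simp add: Un_ac)
qed

lemma fe_step_count_labelled:
  assumes "fe_tile a E b S = (N, W, t)"
  shows "count_labelled LZ (xs @ (a, E) # (b, S) # ys) =
           count_labelled LZ (xs @ (b, N) # (a, W) # ys) + (if t = SAlpha then 1 else 0)"
    and "count_labelled LH (xs @ (a, E) # (b, S) # ys) =
           count_labelled LH (xs @ (b, N) # (a, W) # ys) + (if t = SBeta then 1 else 0)"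
  using assms by (cases rule: fe_tile_cases; simp add: count_labelled_def succ_lab_def)+

lemma split_at_pair:
  assumes "Suc p < length st"
  obtains xs a E b S ys where "st = xs @ (a, E) # (b, S) # ys" and "length xs = p"
proof -
  have "st = take p st @ st ! p # st ! Suc p # drop (Suc (Suc p)) st"
    using assms by (simp add: Cons_nth_drop_Suc)
  with assms that show thesis
    by (metis length_take min.absorb4 prod.exhaust Suc_lessD)
qed

lemma fe_fill_split:
  "length xs = p \<Longrightarrow> fe_tile a E b S = (N, W, t) \<Longrightarrow>
     fe_fill (xs @ (a, E) # (b, S) # ys) (p # ps) = t # fe_fill (xs @ (b, N) # (a, W) # ys) ps"
  by (simp add: nth_append list_update_append)

lemma tiling_seq_split:
  "length xs = p \<Longrightarrow> tiling_seq (map fst (xs @ (a, E) # (b, S) # ys)) (p # ps) \<longleftrightarrow>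
     tile_ok a b \<and> tiling_seq (map fst (xs @ (b, N) # (a, W) # ys)) ps"
  by (simp add: swap_at_def nth_append list_update_append)

lemma prod_list_sym_val:
  fixes \<alpha> \<beta> :: "'a::comm_semiring_1"
  shows "prod_list (map (sym_val \<alpha> \<beta> 1) T) = \<alpha> ^ count_list T SAlpha * \<beta> ^ count_list T SBeta"
  by (induction T) (auto simp: sym_val_def algebra_simps split: tsym.splits)

section \<open>The invariant of the algorithm\<close>

(* bl and b1 play the roles of the smallest and the largest block-end. *)
locale fusion_exchange =
  fixes n bl b1 :: nat
  assumes bl_le_b1: "bl \<le> b1" and bl_le: "bl \<le> n + 1"
begin

definition fe_inv :: "(letter \<times> nat set) list \<Rightarrow> bool" where
  "fe_inv st \<longleftrightarrow>
     (\<forall>e\<in>set st. nat_interval (snd e)) \<and>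
     disjoint_labels st \<and>
     labels st = {1..n + 1} - {bl} \<and>
     (\<forall>e\<in>set st. fst e = LL \<longrightarrow> snd e \<noteq> {} \<and> bl < Max (snd e) \<and> Max (snd e) \<le> b1) \<and>
     (b1 = bl \<or> (\<exists>e\<in>set st. fst e = LL \<and> b1 \<in> snd e)) \<and>
     increases_ok {bl} st"

lemma fe_inv_nat_interval: "fe_inv st \<Longrightarrow> e \<in> set st \<Longrightarrow> nat_interval (snd e)"
  and fe_inv_disjoint: "fe_inv st \<Longrightarrow> disjoint_labels st"
  and fe_inv_labels: "fe_inv st \<Longrightarrow> labels st = {1..n + 1} - {bl}"
  and fe_inv_LL: "fe_inv st \<Longrightarrow> e \<in> set st \<Longrightarrow> fst e = LL \<Longrightarrow>
                    snd e \<noteq> {} \<and> bl < Max (snd e) \<and> Max (snd e) \<le> b1"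
  and fe_inv_b1: "fe_inv st \<Longrightarrow> b1 = bl \<or> (\<exists>e\<in>set st. fst e = LL \<and> b1 \<in> snd e)"
  and fe_inv_increases_ok: "fe_inv st \<Longrightarrow> increases_ok {bl} st"
  by (simp_all add: fe_inv_def)

lemma fe_inv_Max_le:
  assumes "fe_inv st" "e \<in> set st" "v \<in> snd e"
  shows "v \<le> Max (snd e)"
  using Max_ge[OF nat_interval_finite[OF fe_inv_nat_interval[OF assms(1,2)]] assms(3)] .

lemma fe_inv_Max_in:
  assumes "fe_inv st" "e \<in> set st" "snd e \<noteq> {}"
  shows "Max (snd e) \<in> snd e"
  using Max_in[OF nat_interval_finite[OF fe_inv_nat_interval[OF assms(1,2)]] assms(3)] .

lemma fe_inv_label_bounds:
  assumes "fe_inv st" "e \<in> set st" "v \<in> snd e"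
  shows "1 \<le> v" "v \<le> n + 1" "v \<noteq> bl"
proof -
  have "v \<in> labels st"
    using assms(2,3) unfolding labels_def by blast
  then show "1 \<le> v" "v \<le> n + 1" "v \<noteq> bl"
    unfolding fe_inv_labels[OF assms(1)] by simp_all
qed

lemma fe_inv_increase_right:
  assumes inv: "fe_inv (xs @ e # ys)" and "fst e \<noteq> LZ" "snd e \<noteq> {}" "b1 < Max (snd e)"
  shows "\<exists>t\<in>set (label_maxima ys). Max (snd e) < t"
proof -
  have "fst e = LH"
    using assms fe_inv_LL[OF inv, of e] by (cases "fst e") auto
  moreover have "increase_ok ({bl} \<union> labels ys) e"
    using increases_ok_at fe_inv_increases_ok[OF inv] by blast
  ultimately have "Max (snd e) + 1 \<in> labels ys"
    using assms(3,4) bl_le_b1 by (auto simp: increase_ok_def)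
  then obtain d where d: "d \<in> set ys" "Max (snd e) + 1 \<in> snd d"
    by (auto simp: labels_def)
  then have "Max (snd e) < Max (snd d)"
    using fe_inv_Max_le[OF inv, of d] by fastforce
  with d show ?thesis
    using Max_in_label_maxima[of d ys] by blast
qed

lemma fe_inv_decrease_left:
  assumes inv: "fe_inv (xs @ e # ys)" and "fst e \<noteq> LH" "snd e \<noteq> {}" "Max (snd e) < bl"
  shows "\<exists>s\<in>set (label_maxima xs). Max (snd e) < s \<and> s < bl"
proof -
  let ?v = "Max (snd e) + 1"
  have "fst e = LZ"
    using assms fe_inv_LL[OF inv, of e] by (cases "fst e") auto
  moreover have "increase_ok ({bl} \<union> labels ys) e"
    using increases_ok_at fe_inv_increases_ok[OF inv] by blast
  ultimately have "?v \<notin> labels ys" "?v \<noteq> bl"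
    using assms(3) by (auto simp: increase_ok_def)
  moreover have "?v \<notin> snd e"
    using fe_inv_Max_le[OF inv, of e] by force
  moreover have "?v \<in> labels (xs @ e # ys)"
    using fe_inv_labels[OF inv] \<open>?v \<noteq> bl\<close> assms(4) bl_le by auto
  ultimately obtain d where d: "d \<in> set xs" "?v \<in> snd d"
    by (auto simp: labels_def)
  have "bl \<notin> snd d"
    using fe_inv_labels[OF inv] d(1) by (auto simp: labels_def)
  moreover have "?v < bl"
    using \<open>?v \<noteq> bl\<close> assms(4) by simp
  ultimately have "Max (snd d) < bl"
    using nat_interval_Max_less[OF fe_inv_nat_interval[OF inv] d(2)] d(1) by auto
  moreover have "Max (snd e) < Max (snd d)"
    using fe_inv_Max_le[OF inv, of d ?v] d by fastforce
  ultimately show ?thesis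
    using d Max_in_label_maxima[of d xs] by blast
qed

lemma fe_inv_step:
  assumes inv: "fe_inv (xs @ (a, E) # (b, S) # ys)"
    and tile: "fe_tile a E b S = (N, W, t)" and "tile_ok a b"
  shows "fe_inv (xs @ (b, N) # (a, W) # ys)"
proof -
  have E: "nat_interval E" and S: "nat_interval S"
    using fe_inv_nat_interval[OF inv, of "(a, E)"] fe_inv_nat_interval[OF inv, of "(b, S)"] by auto
  have disj: "disjoint_labels (xs @ (a, E) # (b, S) # ys)"
    using fe_inv_disjoint[OF inv] .
  then have "E \<inter> S = {}"
    by auto
  have union: "N \<union> W = E \<union> S"
    using fe_tile_union[OF tile] .
  have "nat_interval N" "nat_interval W"
    using fe_tile_nat_interval[OF tile E S] by auto
  moreover have "disjoint_labels (xs @ (b, N) # (a, W) # ys)"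
    using disj union fe_tile_disjoint[OF tile \<open>E \<inter> S = {}\<close>] by auto
  moreover have "labels (xs @ (b, N) # (a, W) # ys) = labels (xs @ (a, E) # (b, S) # ys)"
    using union by auto
  moreover have "snd e \<noteq> {} \<and> bl < Max (snd e) \<and> Max (snd e) \<le> b1"
    if e: "e \<in> set (xs @ (b, N) # (a, W) # ys)" "fst e = LL" for e
  proof -
    obtain e0 where "e0 \<in> set (xs @ (a, E) # (b, S) # ys)" "fst e0 = LL"
      "snd e0 \<subseteq> snd e" "Max (snd e) = Max (snd e0)"
      using fe_step_LL_edges(1)[OF tile E S e] by blast
    then show ?thesis
      using fe_inv_LL[OF inv, of e0] by auto
  qed
  moreover have "b1 = bl \<or> (\<exists>e\<in>set (xs @ (b, N) # (a, W) # ys). fst e = LL \<and> b1 \<in> snd e)"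
    using fe_inv_b1[OF inv] fe_step_LL_edges(2)[OF tile E S] by blast
  moreover have "increases_ok {bl} (xs @ (b, N) # (a, W) # ys)"
    using fe_step_increases_ok[OF fe_inv_increases_ok[OF inv] tile \<open>tile_ok a b\<close> E S \<open>E \<inter> S = {}\<close>] .
  ultimately show ?thesis
    using inv unfolding fe_inv_def by auto
qed

lemma fe_step_rl_maxima_above:
  assumes inv: "fe_inv (xs @ (a, E) # (b, S) # ys)" and inv': "fe_inv (xs @ (b, N) # (a, W) # ys)"
    and tile: "fe_tile a E b S = (N, W, t)" and "tile_ok a b"
  shows "rl_maxima_above b1 (label_maxima (xs @ (b, N) # (a, W) # ys)) =
         rl_maxima_above b1 (label_maxima (xs @ (a, E) # (b, S) # ys))"
proof -
  have E: "nat_interval E" and S: "nat_interval S"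
    using fe_inv_nat_interval[OF inv, of "(a, E)"] fe_inv_nat_interval[OF inv, of "(b, S)"] by auto
  have "a \<noteq> LZ"
    using \<open>tile_ok a b\<close> by (auto simp: tile_ok_def)
  have right: "b1 < Max W \<Longrightarrow> W \<noteq> {} \<Longrightarrow> \<exists>t\<in>set (label_maxima ys). b1 < t \<and> Max W < t"
    using fe_inv_increase_right[of "xs @ [(b, N)]" "(a, W)" ys] inv' \<open>a \<noteq> LZ\<close> by fastforce
  from tile show ?thesis
  proof (cases rule: fe_tile_cases)
    case fusion_alpha
    then have "E \<noteq> {}" "S \<noteq> {}" "Max S < Max E" "Max W = Max E"
      using nat_interval_succ_lab_union[OF E S] by (auto simp: succ_lab_def)
    moreover have "b1 < Max S \<longrightarrow> (\<exists>t\<in>set (label_maxima ys). b1 < t \<and> Max S < t)"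
      using right fusion_alpha(4) calculation by force
    ultimately show ?thesis
      using fusion_alpha by (simp add: label_maxima_Cons rl_maxima_above_drop_smaller)
  next
    case fusion_beta
    then have "E \<noteq> {}" "S \<noteq> {}" "Max E < Max S" "Max N = Max S"
      using nat_interval_succ_lab_union[OF S E] by (auto simp: succ_lab_def Un_commute)
    with fusion_beta show ?thesis
      by (simp add: label_maxima_Cons rl_maxima_above_drop_before_larger)
  next
    case exchange
    show ?thesis
    proof (cases "E = {} \<or> S = {}")
      case False
      then have "b1 < Max E \<and> b1 < Max S \<longrightarrow> (\<exists>t\<in>set (label_maxima ys). b1 < t \<and> Max E < t)"
        using right exchange(4) by blast
      with exchange False show ?thesis
        by (simp add: label_maxima_Cons rl_maxima_above_swap[of b1 "Max E" "Max S"])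
    qed (use exchange in \<open>auto simp: label_maxima_Cons\<close>)
  qed
qed

lemma fe_step_lr_maxima_below:
  assumes inv: "fe_inv (xs @ (a, E) # (b, S) # ys)" and inv': "fe_inv (xs @ (b, N) # (a, W) # ys)"
    and tile: "fe_tile a E b S = (N, W, t)" and "tile_ok a b"
  shows "lr_maxima_below bl (label_maxima (xs @ (b, N) # (a, W) # ys)) =
         lr_maxima_below bl (label_maxima (xs @ (a, E) # (b, S) # ys))"
proof -
  have E: "nat_interval E" and S: "nat_interval S"
    using fe_inv_nat_interval[OF inv, of "(a, E)"] fe_inv_nat_interval[OF inv, of "(b, S)"] by auto
  have "b \<noteq> LH"
    using \<open>tile_ok a b\<close> by (auto simp: tile_ok_def)
  have left: "Max N < bl \<Longrightarrow> N \<noteq> {} \<Longrightarrow> \<exists>s\<in>set (label_maxima xs). s < bl \<and> Max N < s"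
    using fe_inv_decrease_left[of xs "(b, N)" "(a, W) # ys"] inv' \<open>b \<noteq> LH\<close> by fastforce
  have "nat_interval N" "nat_interval W" "bl \<notin> N" "bl \<notin> W"
    using fe_inv_nat_interval[OF inv', of "(b, N)"] fe_inv_nat_interval[OF inv', of "(a, W)"]
      fe_inv_labels[OF inv'] by auto
  then have below: "Max I < bl" if "I \<in> {N, W}" "v \<in> I" "v < bl" for I v
    using nat_interval_Max_less that by blast
  from tile show ?thesis
  proof (cases rule: fe_tile_cases)
    case fusion_alpha
    then have "E \<noteq> {}" "S \<noteq> {}" "Max S < Max E" "Max W = Max E" "Max S \<in> W"
      using nat_interval_succ_lab_union[OF E S] Max_in[OF nat_interval_finite[OF S]]
      by (auto simp: succ_lab_def)
    moreover have "Max S < bl \<longrightarrow> Max E < bl"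
      using below[of W "Max S"] calculation by simp
    ultimately show ?thesis
      using fusion_alpha by (simp add: label_maxima_Cons lr_maxima_below_drop_smaller)
  next
    case fusion_beta
    then have "E \<noteq> {}" "S \<noteq> {}" "Max E < Max S" "Max N = Max S" "Max E \<in> N"
      using nat_interval_succ_lab_union[OF S E] Max_in[OF nat_interval_finite[OF E]]
      by (auto simp: succ_lab_def Un_commute)
    moreover have "Max E < bl \<longrightarrow> (\<exists>s\<in>set (label_maxima xs). s < bl \<and> Max E < s)"
      using left below[of N "Max E"] calculation fusion_beta(4) by force
    ultimately show ?thesis
      using fusion_beta by (simp add: label_maxima_Cons lr_maxima_below_drop_before_larger)
  next
    case exchange
    show ?thesis
    proof (cases "E = {} \<or> S = {}")
      case False
      then have "Max E < bl \<and> Max S < bl \<longrightarrow> (\<exists>s\<in>set (label_maxima xs). s < bl \<and> Max S < s)"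
        using left exchange(3) by blast
      with exchange False show ?thesis
        by (simp add: label_maxima_Cons lr_maxima_below_swap[of "Max E" bl "Max S"])
    qed (use exchange in \<open>auto simp: label_maxima_Cons\<close>)
  qed
qed

lemma fe_fill_run:
  assumes "fe_inv st" "tiling_seq (map fst st) ps"
  shows "\<exists>st'. fe_inv st' \<and> map fst st' = nw_word (map fst st') \<and>
    rl_maxima_above b1 (label_maxima st') = rl_maxima_above b1 (label_maxima st) \<and>
    lr_maxima_below bl (label_maxima st') = lr_maxima_below bl (label_maxima st) \<and>
    count_labelled LZ st = count_labelled LZ st' + count_list (fe_fill st ps) SAlpha \<and>
    count_labelled LH st = count_labelled LH st' + count_list (fe_fill st ps) SBeta"
  using assms
proof (induction ps arbitrary: st)
  case (Cons p ps)
  obtain xs a E b S ys where st: "st = xs @ (a, E) # (b, S) # ys" and p: "length xs = p"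
    using split_at_pair Cons.prems(2) by (metis tiling_seq.simps(2) length_map)
  obtain N W t where tile: "fe_tile a E b S = (N, W, t)"
    by (metis prod.exhaust)
  let ?st = "xs @ (b, N) # (a, W) # ys"
  have ok: "tile_ok a b" and tiling: "tiling_seq (map fst ?st) ps"
    using Cons.prems(2) tiling_seq_split[OF p] unfolding st by blast+
  have inv: "fe_inv ?st"
    using fe_inv_step Cons.prems(1) tile ok unfolding st by blast
  have "rl_maxima_above b1 (label_maxima ?st) = rl_maxima_above b1 (label_maxima st)"
    "lr_maxima_below bl (label_maxima ?st) = lr_maxima_below bl (label_maxima st)"
    using fe_step_rl_maxima_above fe_step_lr_maxima_below Cons.prems(1) inv tile ok
    unfolding st by blast+
  with Cons.IH[OF inv tiling] show ?case
    using fe_step_count_labelled[OF tile] fe_fill_split[OF p tile] unfolding st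
    by (auto simp: count_list_def)
qed (auto simp: count_list_def)

end

section \<open>The final path\<close>

fun letter_rank :: "letter \<Rightarrow> nat" where
  "letter_rank LZ = 0" | "letter_rank LL = 1" | "letter_rank LH = 2"

lemma sorted_letter_rank_nw_word: "sorted (map letter_rank (nw_word w))"
proof -
  have "sorted (map letter_rank (filter (\<lambda>d. d = c) w))" for c
    by (induction w) auto
  then show ?thesis
    unfolding nw_word_def by (auto simp: sorted_append)
qed

lemma nw_word_split:
  assumes "map fst st = nw_word (map fst st)" and "st = xs @ e # ys"
  shows "fst e = LZ \<Longrightarrow> d \<in> set xs \<Longrightarrow> fst d = LZ"
    and "fst e = LH \<Longrightarrow> d \<in> set ys \<Longrightarrow> fst d = LH"
proof -
  have "sorted (map letter_rank (map fst xs @ fst e # map fst ys))"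
    using sorted_letter_rank_nw_word[of "map fst st"] assms by simp
  then have "d \<in> set xs \<Longrightarrow> letter_rank (fst d) \<le> letter_rank (fst e)"
    and "d \<in> set ys \<Longrightarrow> letter_rank (fst e) \<le> letter_rank (fst d)"
    by (auto simp: sorted_append)
  then show "fst e = LZ \<Longrightarrow> d \<in> set xs \<Longrightarrow> fst d = LZ"
    and "fst e = LH \<Longrightarrow> d \<in> set ys \<Longrightarrow> fst d = LH"
    by (cases "fst d"; auto)+
qed

context fusion_exchange
begin

(* In the final path the successor of the maximum of a 0-label cannot lie further right,
   so it lies in a label further left, again a 0-label. Dually the successor of the
   maximum of an H-label is bl or lies in an H-label further right. *)
lemma final_zero_chain:
  assumes inv: "fe_inv st" and final: "map fst st = nw_word (map fst st)"
  shows "st = xs @ e # ys \<Longrightarrow> fst e = LZ \<Longrightarrow> snd e \<noteq> {} \<Longrightarrow>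
           Max (snd e) < v \<Longrightarrow> v \<le> n + 1 \<Longrightarrow> v \<in> labels xs"
proof (induction "n + 1 - Max (snd e)" arbitrary: xs e ys rule: less_induct)
  case less
  let ?m = "Max (snd e)"
  have e: "e \<in> set st"
    using less.prems(1) by simp
  have "increase_ok ({bl} \<union> labels ys) e"
    using increases_ok_at fe_inv_increases_ok[OF inv] less.prems(1) by blast
  then have "?m + 1 \<notin> labels ys" "?m + 1 \<noteq> bl"
    using less.prems(2,3) by (auto simp: increase_ok_def)
  moreover have "?m + 1 \<notin> snd e"
    using fe_inv_Max_le[OF inv e] by force
  moreover have "?m + 1 \<in> labels st"
    using fe_inv_labels[OF inv] \<open>?m + 1 \<noteq> bl\<close> less.prems(4,5) by auto
  ultimately have "?m + 1 \<in> labels xs"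
    using less.prems(1) by auto
  then obtain xs1 d xs2 where xs: "xs = xs1 @ d # xs2" and d: "?m + 1 \<in> snd d"
    by (rule in_labelsE)
  have "d \<in> set st" "fst d = LZ"
    using nw_word_split(1)[OF final less.prems(1,2)] less.prems(1) xs by auto
  have "?m < Max (snd d)" "Max (snd d) \<le> n + 1"
    using fe_inv_Max_le[OF inv \<open>d \<in> set st\<close> d] fe_inv_Max_in[OF inv \<open>d \<in> set st\<close>] d
      fe_inv_label_bounds(2)[OF inv \<open>d \<in> set st\<close>] by force+
  show ?case
  proof (cases "v \<le> Max (snd d)")
    case True
    then have "v \<in> snd d"
      using nat_interval_between[OF fe_inv_nat_interval[OF inv \<open>d \<in> set st\<close>] d] less.prems(4)
      by simp
    then show ?thesis
      using xs by simp
  next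
    case False
    have "n + 1 - Max (snd d) < n + 1 - ?m"
      using \<open>?m < Max (snd d)\<close> \<open>Max (snd d) \<le> n + 1\<close> by linarith
    then have "v \<in> labels xs1"
      using less.hyps[of d xs1 "xs2 @ e # ys"] less.prems(1,5) \<open>fst d = LZ\<close> d xs False by auto
    then show ?thesis
      using xs by simp
  qed
qed

lemma final_increase_chain:
  assumes inv: "fe_inv st" and final: "map fst st = nw_word (map fst st)"
  shows "st = xs @ e # ys \<Longrightarrow> fst e = LH \<Longrightarrow> snd e \<noteq> {} \<Longrightarrow>
           Max (snd e) < bl \<and> (\<forall>v. Max (snd e) < v \<and> v < bl \<longrightarrow> v \<in> labels ys)"
proof (induction "n + 1 - Max (snd e)" arbitrary: xs e ys rule: less_induct)
  case less
  let ?m = "Max (snd e)"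
  have "increase_ok ({bl} \<union> labels ys) e"
    using increases_ok_at fe_inv_increases_ok[OF inv] less.prems(1) by blast
  then have "?m + 1 = bl \<or> ?m + 1 \<in> labels ys"
    using less.prems(2,3) by (auto simp: increase_ok_def)
  then show ?case
  proof
    assume "?m + 1 \<in> labels ys"
    then obtain ys1 d ys2 where ys: "ys = ys1 @ d # ys2" and d: "?m + 1 \<in> snd d"
      by (rule in_labelsE)
    have "d \<in> set st" "fst d = LH"
      using nw_word_split(2)[OF final less.prems(1,2)] less.prems(1) ys by auto
    have "?m < Max (snd d)" "Max (snd d) \<le> n + 1"
      using fe_inv_Max_le[OF inv \<open>d \<in> set st\<close> d] fe_inv_Max_in[OF inv \<open>d \<in> set st\<close>] d
        fe_inv_label_bounds(2)[OF inv \<open>d \<in> set st\<close>] by force+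
    then have "n + 1 - Max (snd d) < n + 1 - ?m"
      by linarith
    then have IH: "Max (snd d) < bl \<and> (\<forall>v. Max (snd d) < v \<and> v < bl \<longrightarrow> v \<in> labels ys2)"
      using less.hyps[of d "xs @ e # ys1" ys2] less.prems(1) \<open>fst d = LH\<close> d ys by auto
    have "v \<in> labels ys" if "?m < v" "v < bl" for v
    proof (cases "v \<le> Max (snd d)")
      case True
      then have "v \<in> snd d"
        using nat_interval_between[OF fe_inv_nat_interval[OF inv \<open>d \<in> set st\<close>] d] that(1) by simp
      then show ?thesis
        using ys by simp
    qed (use IH ys that in auto)
    then show ?thesis
      using IH \<open>?m < Max (snd d)\<close> by auto
  qed auto
qed

lemma final_LZ_above_b1:
  assumes inv: "fe_inv st" and final: "map fst st = nw_word (map fst st)"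
    and e: "e \<in> set st" "fst e = LZ" "snd e \<noteq> {}"
  shows "b1 < Max (snd e)"
proof (rule ccontr)
  assume not_above: "\<not> b1 < Max (snd e)"
  obtain xs ys where st: "st = xs @ e # ys"
    using split_list[OF e(1)] by blast
  have Max_e: "Max (snd e) \<in> snd e"
    using fe_inv_Max_in[OF inv e(1,3)] .
  from fe_inv_b1[OF inv] consider "b1 = bl" | d where "d \<in> set st" "fst d = LL" "b1 \<in> snd d"
    by blast
  then show False
  proof cases
    case 1
    then have "Max (snd e) < bl"
      using not_above fe_inv_label_bounds(3)[OF inv e(1) Max_e] by simp
    then have "bl \<in> labels xs"
      using final_zero_chain[OF inv final st e(2,3)] bl_le by blast
    then show False
      using fe_inv_labels[OF inv] st by auto
  next
    case 2
    have unique: "d' = d" if "d' \<in> set st" "b1 \<in> snd d'" for d'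
      using disjoint_labels_unique[OF fe_inv_disjoint[OF inv]] that 2 by blast
    have "Max (snd e) \<noteq> b1"
    proof
      assume "Max (snd e) = b1"
      then have "e = d"
        using unique[OF e(1)] Max_e by simp
      then show False
        using e(2) 2(2) by simp
    qed
    then have "b1 \<in> labels xs"
      using final_zero_chain[OF inv final st e(2,3)] not_above
        fe_inv_label_bounds(2)[OF inv 2(1,3)] by simp
    then obtain d' where "d' \<in> set xs" "b1 \<in> snd d'"
      by (auto simp: labels_def)
    then show False
      using nw_word_split(1)[OF final st e(2)] unique[of d'] st 2(2) by auto
  qed
qed

lemma final_LH_below_bl:
  assumes inv: "fe_inv st" and final: "map fst st = nw_word (map fst st)"
    and e: "e \<in> set st" "fst e = LH" "snd e \<noteq> {}"
  shows "Max (snd e) < bl"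
  using split_list[OF e(1)] final_increase_chain[OF inv final _ e(2,3)] by blast

lemma final_letter_by_Max:
  assumes inv: "fe_inv st" and final: "map fst st = nw_word (map fst st)"
    and e: "e \<in> set st" "snd e \<noteq> {}"
  shows "b1 < Max (snd e) \<longleftrightarrow> fst e = LZ" and "Max (snd e) < bl \<longleftrightarrow> fst e = LH"
proof -
  have "(b1 < Max (snd e) \<longleftrightarrow> fst e = LZ) \<and> (Max (snd e) < bl \<longleftrightarrow> fst e = LH)"
  proof (cases "fst e")
    case LZ
    then show ?thesis using final_LZ_above_b1[OF inv final e(1) _ e(2)] bl_le_b1 by simp
  next
    case LL
    then show ?thesis using fe_inv_LL[OF inv e(1)] bl_le_b1 by simp
  next
    case LH
    then show ?thesis using final_LH_below_bl[OF inv final e(1) _ e(2)] bl_le_b1 by simp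
  qed
  then show "b1 < Max (snd e) \<longleftrightarrow> fst e = LZ" "Max (snd e) < bl \<longleftrightarrow> fst e = LH"
    by simp_all
qed

lemma final_count_LZ:
  assumes inv: "fe_inv st" and final: "map fst st = nw_word (map fst st)"
  shows "count_labelled LZ st = card (rl_maxima_above b1 (label_maxima st))"
proof -
  have filter_eq: "filter ((<) b1) (label_maxima st) = label_maxima (filter (\<lambda>e. fst e = LZ) st)"
    by (rule filter_label_maxima) (rule final_letter_by_Max(1)[OF inv final])
  have sorted: "sorted_wrt (>) (label_maxima (filter (\<lambda>e. fst e = LZ) st))"
  proof (rule sorted_wrt_label_maxima)
    fix xs d ys e zs
    assume st: "st = xs @ d # ys @ e # zs" and "fst d = LZ" "fst e = LZ" "snd d \<noteq> {}" "snd e \<noteq> {}"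
    have "e \<in> set st" "d \<in> set st"
      using st by auto
    then have "Max (snd e) \<in> snd e" "Max (snd d) \<in> snd d" "Max (snd e) \<le> n + 1"
      using fe_inv_Max_in[OF inv] fe_inv_label_bounds(2)[OF inv] \<open>snd e \<noteq> {}\<close> \<open>snd d \<noteq> {}\<close>
      by blast+
    moreover have "disjoint_labels st"
      using fe_inv_disjoint[OF inv] .
    ultimately show "Max (snd e) < Max (snd d)"
      using final_zero_chain[OF inv final st \<open>fst d = LZ\<close> \<open>snd d \<noteq> {}\<close>, of "Max (snd e)"] st
      by (cases "Max (snd e)" "Max (snd d)" rule: linorder_cases) auto
  qed
  have "rl_maxima_above b1 (label_maxima st) = set (label_maxima (filter (\<lambda>e. fst e = LZ) st))"
    using rl_maxima_above_sorted[of b1 "label_maxima st"] sorted unfolding filter_eq by simp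
  then show ?thesis
    using distinct_card[OF sorted_wrt_greater_distinct[OF sorted]]
    by (simp add: count_labelled_conv_label_maxima)
qed

lemma final_count_LH:
  assumes inv: "fe_inv st" and final: "map fst st = nw_word (map fst st)"
  shows "count_labelled LH st = card (lr_maxima_below bl (label_maxima st))"
proof -
  have filter_eq: "filter (\<lambda>x. x < bl) (label_maxima st) = label_maxima (filter (\<lambda>e. fst e = LH) st)"
    by (rule filter_label_maxima) (rule final_letter_by_Max(2)[OF inv final])
  have sorted: "sorted_wrt (<) (label_maxima (filter (\<lambda>e. fst e = LH) st))"
  proof (rule sorted_wrt_label_maxima)
    fix xs d ys e zs
    assume st: "st = xs @ d # ys @ e # zs" and "fst d = LH" "fst e = LH" "snd d \<noteq> {}" "snd e \<noteq> {}"
    have "e \<in> set st" "d \<in> set st"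
      using st by auto
    then have "Max (snd e) \<in> snd e" "Max (snd d) \<in> snd d" "Max (snd d) < bl"
      using fe_inv_Max_in[OF inv] final_LH_below_bl[OF inv final] \<open>fst d = LH\<close>
        \<open>snd e \<noteq> {}\<close> \<open>snd d \<noteq> {}\<close> by blast+
    moreover have "disjoint_labels st"
      using fe_inv_disjoint[OF inv] .
    moreover have "st = (xs @ d # ys) @ e # zs"
      using st by simp
    ultimately show "Max (snd d) < Max (snd e)"
      using final_increase_chain[OF inv final _ \<open>fst e = LH\<close> \<open>snd e \<noteq> {}\<close>] st
      by (cases "Max (snd d)" "Max (snd e)" rule: linorder_cases) auto
  qed
  have "lr_maxima_below bl (label_maxima st) = set (label_maxima (filter (\<lambda>e. fst e = LH) st))"
    using lr_maxima_below_sorted[of bl "label_maxima st"] sorted unfolding filter_eq by simp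
  then show ?thesis
    using sorted by (simp add: count_labelled_conv_label_maxima strict_sorted_iff distinct_card)
qed

end

section \<open>The initial path of an assemblee\<close>

lemma nth_pair_distinct_iff:
  assumes "distinct w" "w = us @ x # vs"
  shows "(\<exists>p q. p < q \<and> q < length w \<and> w ! p = x \<and> w ! q = y) \<longleftrightarrow> y \<in> set vs"
proof
  assume "\<exists>p q. p < q \<and> q < length w \<and> w ! p = x \<and> w ! q = y"
  then obtain p q where pq: "p < q" "q < length w" "w ! p = x" "w ! q = y"
    by blast
  have "w ! length us = x" "length us < length w"
    using assms(2) by simp_all
  then have "p = length us"
    using nth_eq_iff_index_eq[OF assms(1), of p "length us"] pq by simp
  then show "y \<in> set vs"
    using pq assms(2) by (auto simp: nth_append nth_Cons' split: if_splits)
next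
  assume "y \<in> set vs"
  then obtain k where "k < length vs" "vs ! k = y"
    by (auto simp: in_set_conv_nth)
  then show "\<exists>p q. p < q \<and> q < length w \<and> w ! p = x \<and> w ! q = y"
    using assms(2) by (intro exI[of _ "length us"] exI[of _ "Suc (length us + k)"]) (simp add: nth_append)
qed

definition singleton_path :: "(nat \<Rightarrow> letter) \<Rightarrow> nat list \<Rightarrow> (letter \<times> nat set) list" where
  "singleton_path f ws = map (\<lambda>x. (f x, {x})) ws"

lemma singleton_path_labels: "labels (singleton_path f ws) = set ws"
  and singleton_path_disjoint: "disjoint_labels (singleton_path f ws) \<longleftrightarrow> distinct ws"
  and singleton_path_label_maxima: "label_maxima (singleton_path f ws) = ws"
  and singleton_path_count_labelled: "count_labelled c (singleton_path f ws) = nletters c (map f ws)"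
  by (induction ws) (auto simp: singleton_path_def label_maxima_Cons count_labelled_def nletters_def)

lemma singleton_path_increases_ok:
  assumes "\<And>us x vs. ws = us @ x # vs \<Longrightarrow> increase_ok (R \<union> set vs) (f x, {x})"
  shows "increases_ok R (singleton_path f ws)"
  using assms
proof (induction ws)
  case (Cons x ws)
  have "increase_ok (R \<union> set ws) (f x, {x})"
    using Cons.prems[of "[]"] by simp
  moreover have "increases_ok R (singleton_path f ws)"
    using Cons.prems[of "x # _"] by (intro Cons.IH) auto
  ultimately show ?case
    by (simp add: singleton_path_def singleton_path_labels[unfolded singleton_path_def])
qed (simp add: singleton_path_def)

lemma init_labels_singleton_path:
  "init_labels bs = singleton_path (letter_of bs) (butlast (concat bs))"
  by (simp add: init_labels_def Xword_def singleton_path_def zip_map1 zip_map2 zip_same_conv_map)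

lemma nletters_sum: "nletters LH X + nletters LZ X + nletters LL X = length X"
proof (induction X)
  case (Cons a X)
  then show ?case by (cases a) (simp_all add: nletters_def)
qed (simp add: nletters_def)

lemma assemblee_concat:
  assumes "bs \<in> assemblees m s"
  shows "distinct (concat bs)" and "set (concat bs) = {1..m}"
  using assms by (simp_all add: assemblees_def)

lemma assemblee_last_concat:
  assumes "bs \<in> assemblees m s" "1 \<le> s"
  shows "last (concat bs) = bmin bs"
proof -
  have "bs \<noteq> []"
    using assms by (auto simp: assemblees_def)
  moreover from this have "last bs \<noteq> []"
    using assms(1) by (simp add: assemblees_def)
  ultimately have "concat bs = concat (butlast bs) @ last bs"
    by (metis append_butlast_last_id concat.simps concat_append append_Nil2)
  then show ?thesis
    using \<open>last bs \<noteq> []\<close> by (simp add: bmin_def)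
qed

lemma assemblee_block_ends:
  assumes "bs \<in> assemblees m s" "1 \<le> s"
  shows "block_ends bs \<subseteq> set (concat bs)"
    and "bmin bs \<in> block_ends bs" and "bmax bs \<in> block_ends bs"
    and "x \<in> block_ends bs \<Longrightarrow> bmin bs \<le> x \<and> x \<le> bmax bs"
    and "card (block_ends bs) = s"
proof -
  have ne: "bs \<noteq> []" "\<forall>b\<in>set bs. b \<noteq> []" and sorted: "sorted_wrt (>) (map last bs)"
    and len: "length bs = s"
    using assms by (auto simp: assemblees_def)
  show "block_ends bs \<subseteq> set (concat bs)"
    using ne(2) by (auto simp: block_ends_def)
  show "bmin bs \<in> block_ends bs" "bmax bs \<in> block_ends bs"
    using ne(1) by (simp_all add: block_ends_def bmin_def bmax_def)
  show "x \<in> block_ends bs \<Longrightarrow> bmin bs \<le> x \<and> x \<le> bmax bs"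
    using sorted_wrt_greater_bounds[OF sorted] ne(1)
    by (simp add: block_ends_def bmin_def bmax_def last_map hd_map)
  show "card (block_ends bs) = s"
    using distinct_card[OF sorted_wrt_greater_distinct[OF sorted]] len
    by (simp add: block_ends_def)
qed

lemma assemblee_concat_snoc:
  assumes "bs \<in> assemblees (n + 1) (r + 1)"
  shows "concat bs = butlast (concat bs) @ [bmin bs]"
    and "set (butlast (concat bs)) = {1..n + 1} - {bmin bs}"
proof -
  have "1 \<in> set (concat bs)"
    using assemblee_concat(2)[OF assms] by simp
  then have "concat bs \<noteq> []"
    by (metis empty_iff empty_set)
  then obtain ws where ws: "concat bs = ws @ [bmin bs]"
    using assemblee_last_concat[OF assms le_add2] by (metis append_butlast_last_id)
  then show "concat bs = butlast (concat bs) @ [bmin bs]"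
    by simp
  have "distinct (ws @ [bmin bs])" "set (ws @ [bmin bs]) = {1..n + 1}"
    using assemblee_concat[OF assms] unfolding ws by auto
  then show "set (butlast (concat bs)) = {1..n + 1} - {bmin bs}"
    unfolding ws by auto
qed

lemma lrs_conv_rl_maxima_above: "lrs bs = rl_maxima_above (bmax bs) (concat bs)"
  unfolding lrs_def Let_def rl_maxima_above_conv_nth by (auto 0 3)

lemma rls_conv_lr_maxima_below: "rls bs = lr_maxima_below (bmin bs) (concat bs)"
  unfolding rls_def Let_def lr_maxima_below_conv_nth by simp

lemma letter_of_increase:
  assumes "bs \<in> assemblees (n + 1) (r + 1)" "butlast (concat bs) = us @ x # vs"
    "x \<notin> block_ends bs"
  shows "letter_of bs x = LH \<longleftrightarrow> x + 1 \<in> insert (bmin bs) (set vs)"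
proof -
  have "concat bs = us @ x # (vs @ [bmin bs])"
    using assemblee_concat_snoc(1)[OF assms(1)] assms(2) by simp
  then have "is_increase bs x \<longleftrightarrow> x + 1 \<in> set (vs @ [bmin bs])"
    unfolding is_increase_def Let_def
    using nth_pair_distinct_iff[OF assemblee_concat(1)[OF assms(1)], of us x _ "x + 1"] assms(3)
    by simp
  then show ?thesis
    using assms(3) by (simp add: letter_of_def)
qed

lemma init_fusion_exchange:
  assumes "bs \<in> assemblees (n + 1) (r + 1)"
  shows "fusion_exchange n (bmin bs) (bmax bs)"
  using assemblee_block_ends[OF assms le_add2] assemblee_concat(2)[OF assms]
  by unfold_locales auto

lemma init_increases_ok:
  assumes bs: "bs \<in> assemblees (n + 1) (r + 1)"
  shows "increases_ok {bmin bs} (init_labels bs)"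
  unfolding init_labels_singleton_path
proof (rule singleton_path_increases_ok)
  fix us x vs assume split: "butlast (concat bs) = us @ x # vs"
  show "increase_ok ({bmin bs} \<union> set vs) (letter_of bs x, {x})"
  proof (cases "x \<in> block_ends bs")
    case False
    then show ?thesis
      using letter_of_increase[OF bs split] by (simp add: increase_ok_def)
  qed (simp add: increase_ok_def letter_of_def)
qed

lemma init_fe_inv:
  assumes bs: "bs \<in> assemblees (n + 1) (r + 1)"
  shows "fusion_exchange.fe_inv n (bmin bs) (bmax bs) (init_labels bs)"
proof -
  let ?ws = "butlast (concat bs)"
  have ws: "distinct ?ws" "set ?ws = {1..n + 1} - {bmin bs}"
    using assemblee_concat(1)[OF bs] distinct_butlast assemblee_concat_snoc(2)[OF bs] by auto
  have ends: "x \<in> block_ends bs \<Longrightarrow> bmin bs \<le> x \<and> x \<le> bmax bs" for x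
    using assemblee_block_ends(4)[OF bs le_add2] by simp
  have LL: "x \<in> block_ends bs" if "letter_of bs x = LL" for x
    using that by (auto simp: letter_of_def split: if_splits)
  have "bmax bs = bmin bs \<or> (\<exists>e\<in>set (init_labels bs). fst e = LL \<and> bmax bs \<in> snd e)"
  proof -
    have "bmax bs = bmin bs \<or> bmax bs \<in> set ?ws \<and> letter_of bs (bmax bs) = LL"
      using assemblee_block_ends(1,3)[OF bs le_add2] assemblee_concat(2)[OF bs] ws(2)
      by (auto simp: letter_of_def)
    then show ?thesis
      by (auto simp: init_labels_singleton_path singleton_path_def)
  qed
  moreover have "snd e \<noteq> {} \<and> bmin bs < Max (snd e) \<and> Max (snd e) \<le> bmax bs"
    if "e \<in> set (init_labels bs)" "fst e = LL" for e
    using that ends LL ws(2) by (force simp: init_labels_singleton_path singleton_path_def)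
  moreover have "labels (init_labels bs) = {1..n + 1} - {bmin bs}"
    by (simp add: init_labels_singleton_path singleton_path_labels ws(2))
  moreover have "disjoint_labels (init_labels bs)"
    using ws(1) by (simp add: init_labels_singleton_path singleton_path_disjoint)
  moreover have "\<forall>e\<in>set (init_labels bs). nat_interval (snd e)"
    by (auto simp: init_labels_singleton_path singleton_path_def)
  ultimately show ?thesis
    using init_increases_ok[OF bs]
    unfolding fusion_exchange.fe_inv_def[OF init_fusion_exchange[OF bs]] by blast
qed

lemma init_rl_maxima_above:
  assumes "bs \<in> assemblees (n + 1) (r + 1)"
  shows "rl_maxima_above (bmax bs) (label_maxima (init_labels bs)) = lrs bs"
  using rl_maxima_above_snoc_le[of "bmin bs" "bmax bs" "butlast (concat bs)"]
    assemblee_block_ends(2,4)[OF assms le_add2] assemblee_concat_snoc(1)[OF assms]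
  by (simp add: lrs_conv_rl_maxima_above init_labels_singleton_path singleton_path_label_maxima)

lemma init_lr_maxima_below:
  assumes "bs \<in> assemblees (n + 1) (r + 1)"
  shows "lr_maxima_below (bmin bs) (label_maxima (init_labels bs)) = rls bs"
  using lr_maxima_below_snoc_ge[of "bmin bs" "bmin bs" "butlast (concat bs)"]
    assemblee_concat_snoc(1)[OF assms]
  by (simp add: rls_conv_lr_maxima_below init_labels_singleton_path singleton_path_label_maxima)

lemma init_count_labelled: "count_labelled c (init_labels bs) = nletters c (Xword bs)"
  by (simp add: init_labels_singleton_path singleton_path_count_labelled Xword_def)

lemma Xword_nletters:
  assumes bs: "bs \<in> assemblees (n + 1) (r + 1)"
  shows "nletters LH (Xword bs) + nletters LZ (Xword bs) = n - r"
proof -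
  let ?ws = "butlast (concat bs)"
  have "length (concat bs) = n + 1"
    using distinct_card[OF assemblee_concat(1)[OF bs]] assemblee_concat(2)[OF bs] by simp
  then have "length (Xword bs) = n"
    by (simp add: Xword_def)
  have "block_ends bs \<inter> set ?ws = block_ends bs - {bmin bs}"
    using assemblee_block_ends(1)[OF bs le_add2] assemblee_concat(2)[OF bs]
      assemblee_concat_snoc(2)[OF bs] by auto
  then have "nletters LL (Xword bs) = card (block_ends bs - {bmin bs})"
    using distinct_length_filter[OF distinct_butlast[OF assemblee_concat(1)[OF bs]]]
    by (simp add: nletters_def Xword_def filter_map comp_def letter_of_def Int_commute)
  also have "\<dots> = r"
    using assemblee_block_ends(2,5)[OF bs le_add2] by simp
  finally show ?thesis
    using nletters_sum[of "Xword bs"] \<open>length (Xword bs) = n\<close> by simp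
qed

theorem theorem3p2:
  fixes n r i j :: nat and bs :: "nat list list" and ps :: "nat list"
    and \<alpha> \<beta> :: "'a::comm_semiring_1"
  assumes "r \<le> n"
    and "bs \<in> assemblees (n + 1) (r + 1)"
    and "card (lrs bs) = i" and "card (rls bs) = j"
    and "tiling_seq (Xword bs) ps"
  shows "wt \<alpha> \<beta> 1 (Xword bs) (fe_fill (init_labels bs) ps) = \<alpha> ^ (n - r - i) * \<beta> ^ (n - r - j)"
proof -
  interpret fusion_exchange n "bmin bs" "bmax bs"
    using init_fusion_exchange[OF assms(2)] .
  let ?T = "fe_fill (init_labels bs) ps"
  have "map fst (init_labels bs) = Xword bs"
    by (simp add: init_labels_def Xword_def)
  then obtain st where st: "fe_inv st" "map fst st = nw_word (map fst st)"
    "rl_maxima_above (bmax bs) (label_maxima st) = lrs bs"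
    "lr_maxima_below (bmin bs) (label_maxima st) = rls bs"
    "nletters LZ (Xword bs) = count_labelled LZ st + count_list ?T SAlpha"
    "nletters LH (Xword bs) = count_labelled LH st + count_list ?T SBeta"
    using fe_fill_run[OF init_fe_inv[OF assms(2)]] assms(5)
      init_rl_maxima_above[OF assms(2)] init_lr_maxima_below[OF assms(2)]
    by (fastforce simp: init_count_labelled)
  have "count_labelled LZ st = i" "count_labelled LH st = j"
    using final_count_LZ[OF st(1,2)] final_count_LH[OF st(1,2)] st(3,4) assms(3,4) by simp_all
  then have "n - r - i = nletters LH (Xword bs) + count_list ?T SAlpha"
    and "n - r - j = nletters LZ (Xword bs) + count_list ?T SBeta"
    using st(5,6) Xword_nletters[OF assms(2)] by linarith+
  then show ?thesis
    by (simp add: wt_def prod_list_sym_val power_add ac_simps)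
qed

end
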